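(* Let $\alpha>0$, let $0<p<\infty$, and let $f$ be an entire function. If \[ \int_{\mathbb{C}}|f(z)|^p|z|^2e^{-\alpha|z|^2}\,dA(z)<\infty, \] then \[ \lim_{r\to\infty}r^3M_p^p(r,f)\,e^{-\alpha r^2}=0 . \]
   Context: $dA$ is area measure and $M_p(r,f)=\left(\int_0^{2\pi}|f(re^{i\theta})|^p\,d\theta\right)^{1/p}$. *)

theory Defs
  imports "HOL-Complex_Analysis.Complex_Analysis"
begin

text \<open>Integral mean: Mpp p r f = M_p(r,f)^p = integral over [0,2pi] of |f(r e^{i theta})|^p.\<close>
definition Mpp :: "real \<Rightarrow> real \<Rightarrow> (complex \<Rightarrow> complex) \<Rightarrow> real" where
  "Mpp p r f = (LBINT t=0..2*pi. norm (f (of_real r * cis t)) powr p)"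

end

(*
  Write Q(z) for the closed square of half-width 1 centred at z. The heart of the proof is the weighted
  sub-mean value estimate
    |f(z)|^p e^{-\<alpha>|z|^2} \<le> C \<integral>_{Q(z)} |f(w)|^p e^{-\<alpha>|w|^2} dA(w).
  For p = 1 and without weight it follows from Cauchy's formula on squares of half-width
  s \<in> [d/2, d], averaged over s so that the contour integrals become an area integral. The
  Hardy-Littlewood absorption argument extends it to exponents q \<le> 1, applying it to a power
  f^n gives every p > 0, and multiplying f by the zero-free factor
  exp (-(2\<alpha>/p) cnj z (w - z)) makes the Gaussian weight comparable to a constant on Q(z).

  Integrating the estimate over the circle |z| = r and exchanging the integrals, a point w
  lies in Q(r e^{it}) only if |w| \<ge> r - 2 and only for t in a set of measure at most 16/r.
  Hence r^3 M_p^p(r, f) e^{-\<alpha> r^2} is bounded by a constant times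
  \<integral>_{|w| \<ge> r - 2} |f|^p |w|^2 e^{-\<alpha>|w|^2} dA, the tail of a convergent integral.
*)

theory Submission
  imports Defs
begin

section \<open>Lebesgue measure on squares\<close>

lemma measurable_Complex [measurable (raw)]:
  assumes "f \<in> borel_measurable M" "g \<in> borel_measurable M"
  shows "(\<lambda>x. Complex (f x) (g x)) \<in> borel_measurable M"
  using assms by (simp add: borel_measurable_complex_iff)

lemma measurable_cis [measurable (raw)]:
  "g \<in> borel_measurable M \<Longrightarrow> (\<lambda>x. cis (g x)) \<in> borel_measurable M"
  by (simp add: cis.code)

lemma lborel_complex_eq_distr_Complex:
  "(lborel :: complex measure) = distr (lborel \<Otimes>\<^sub>M lborel) borel (\<lambda>(x, y). Complex x y)"
proof (rule lborel_eqI)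
  fix l u :: complex
  assume le: "\<And>b. b \<in> Basis \<Longrightarrow> l \<bullet> b \<le> u \<bullet> b"
  then have "Re l \<le> Re u" "Im l \<le> Im u"
    using le[of 1] le[of \<i>] by (auto simp: Basis_complex_def)
  moreover have "(\<lambda>(x, y). Complex x y) -` box l u \<inter> space (lborel \<Otimes>\<^sub>M lborel)
      = {Re l<..<Re u} \<times> {Im l<..<Im u}"
    by (auto simp: in_box_complex_iff space_pair_measure)
  ultimately show "emeasure (distr (lborel \<Otimes>\<^sub>M lborel) borel (\<lambda>(x, y). Complex x y)) (box l u)
      = (\<Prod>b\<in>Basis. (u - l) \<bullet> b)"
    by (subst emeasure_distr)
       (auto simp: lborel.emeasure_pair_measure_Times Basis_complex_def ennreal_mult)
qed simp

lemma nn_integral_lborel_complex: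
  assumes [measurable]: "H \<in> borel_measurable (borel :: complex measure)"
  shows "(\<integral>\<^sup>+ z. H z \<partial>lborel) = (\<integral>\<^sup>+ x. \<integral>\<^sup>+ y. H (Complex x y) \<partial>lborel \<partial>lborel)"
  by (subst lborel_complex_eq_distr_Complex)
     (simp add: nn_integral_distr lborel.nn_integral_fst[symmetric])

definition closed_square :: "complex \<Rightarrow> real \<Rightarrow> complex set" where
  "closed_square z d = cbox (z - Complex d d) (z + Complex d d)"

lemma mem_closed_square:
  "w \<in> closed_square z d \<longleftrightarrow> \<bar>Re (w - z)\<bar> \<le> d \<and> \<bar>Im (w - z)\<bar> \<le> d"
  by (auto simp: closed_square_def in_cbox_complex_iff)

lemma compact_closed_square: "compact (closed_square z d)"
  by (simp add: closed_square_def)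

lemma closed_square_sets [measurable]: "closed_square z d \<in> sets borel"
  by (simp add: closed_square_def)

lemma pred_in_closed_square [measurable (raw)]:
  assumes [measurable]: "f \<in> borel_measurable M" "g \<in> borel_measurable M"
  shows "Measurable.pred M (\<lambda>x. f x \<in> closed_square (g x) d)"
  unfolding mem_closed_square by measurable

lemma norm_diff_squared_le_of_in_closed_square:
  assumes "w \<in> closed_square z 1"
  shows "(cmod (w - z))\<^sup>2 \<le> 2"
proof -
  have "(Re (w - z))\<^sup>2 \<le> 1" "(Im (w - z))\<^sup>2 \<le> 1"
    using assms by (auto simp: mem_closed_square abs_square_le_1)
  then show ?thesis
    unfolding cmod_power2 by simp
qed

lemma nn_integral_closed_square:
  assumes [measurable]: "H \<in> borel_measurable borel"
  shows "(\<integral>\<^sup>+ w. indicator (closed_square z d) w * H w \<partial>lborel)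
     = (\<integral>\<^sup>+ x. \<integral>\<^sup>+ y. indicator {-d..d} x * indicator {-d..d} y * H (z + Complex x y)
          \<partial>lborel \<partial>lborel)"
proof -
  have "(\<integral>\<^sup>+ w. indicator (closed_square z d) w * H w \<partial>lborel)
      = (\<integral>\<^sup>+ w. indicator (closed_square z d) (z + w) * H (z + w) \<partial>lborel)"
    by (subst lborel_distr_plus[symmetric, of z]) (simp add: nn_integral_distr)
  also have "\<dots> = (\<integral>\<^sup>+ x. \<integral>\<^sup>+ y. indicator (closed_square z d) (z + Complex x y) * H (z + Complex x y)
      \<partial>lborel \<partial>lborel)"
    by (rule nn_integral_lborel_complex) measurable
  also have "\<dots> = (\<integral>\<^sup>+ x. \<integral>\<^sup>+ y. indicator {-d..d} x * indicator {-d..d} y * H (z + Complex x y)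
      \<partial>lborel \<partial>lborel)"
    by (intro nn_integral_cong) (auto simp: mem_closed_square indicator_def)
  finally show ?thesis .
qed

section \<open>Cauchy's formula on squares\<close>

lemma norm_contour_integral_linepath_div_le:
  fixes G :: "complex \<Rightarrow> complex"
  assumes contG: "continuous_on (closed_segment a b) G" and s: "s > 0"
    and far: "\<And>w. w \<in> closed_segment a b \<Longrightarrow> s \<le> cmod (w - z)"
  shows "cmod (contour_integral (linepath a b) (\<lambda>w. G w / (w - z)))
      \<le> cmod (b - a) / s * integral {0..1} (\<lambda>x. cmod (G (linepath a b x)))"
proof -
  define g where "g = (\<lambda>w. G w / (w - z))"
  have on_segment: "linepath a b x \<in> closed_segment a b" if "x \<in> {0..1}" for x
    using that by (metis imageI path_image_def path_image_linepath)
  have "continuous_on (closed_segment a b) g"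
    unfolding g_def by (intro continuous_intros contG) (use far[of z] s in force)
  then have "((\<lambda>x. g (linepath a b x) * (b - a)) has_integral contour_integral (linepath a b) g) {0..1}"
    using contour_integrable_continuous_linepath has_contour_integral_integral
      has_contour_integral_linepath by blast
  moreover have "continuous_on {0..1} (\<lambda>x. cmod (G (linepath a b x)))"
    using on_segment
    by (intro continuous_intros continuous_on_compose2[OF contG]) (auto intro: continuous_intros)
  then have "((\<lambda>x. cmod (G (linepath a b x)) * (cmod (b - a) / s)) has_integral
      integral {0..1} (\<lambda>x. cmod (G (linepath a b x))) * (cmod (b - a) / s)) {0..1}"
    by (intro has_integral_mult_left integrable_integral integrable_continuous_interval)
  moreover have "cmod (g (linepath a b x) * (b - a)) \<le> cmod (G (linepath a b x)) * (cmod (b - a) / s)"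
    if "x \<in> {0..1}" for x
    using far[OF on_segment[OF that]] s
    by (simp add: g_def norm_mult norm_divide)
       (intro divide_left_mono mult_nonneg_nonneg mult_pos_pos; force)
  ultimately show ?thesis
    unfolding g_def[symmetric]
    by (metis (no_types, lifting) has_integral_integrable_integral integral_norm_bound_integral
        mult.commute)
qed

lemma norm_contour_integral_segment_le:
  fixes G :: "complex \<Rightarrow> complex"
  assumes contG: "continuous_on UNIV G" and s: "s > 0" and e: "cmod e = 1"
    and far: "\<And>w. w \<in> closed_segment (m - of_real s * e) (m + of_real s * e) \<Longrightarrow> s \<le> cmod (w - z)"
  shows "ennreal (cmod (contour_integral (linepath (m - of_real s * e) (m + of_real s * e))
            (\<lambda>w. G w / (w - z))))
      \<le> ennreal (1 / s) * (\<integral>\<^sup>+ X. ennreal (indicator {-s..s} X * cmod (G (m + of_real X * e))) \<partial>lborel)"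
proof -
  define a b where "a = m - of_real s * e" and "b = m + of_real s * e"
  define h where "h = (\<lambda>X. cmod (G (m + of_real X * e)))"
  have line: "linepath a b x = m + of_real (- s + 2 * s * x) * e" for x
    by (simp add: a_def b_def linepath_def scaleR_conv_of_real algebra_simps)
  have "continuous_on UNIV h"
    unfolding h_def by (intro continuous_intros continuous_on_compose2[OF contG]) auto
  then have [measurable]: "h \<in> borel_measurable borel"
    by (rule borel_measurable_continuous_onI)
  have "((\<lambda>x. h (- s + 2 * s * x)) has_integral integral {0..1} (\<lambda>x. h (- s + 2 * s * x))) {0..1}"
    by (intro integrable_integral integrable_continuous_interval continuous_on_compose2[OF \<open>continuous_on UNIV h\<close>])
       (auto intro: continuous_intros)
  then have "ennreal (integral {0..1} (\<lambda>x. h (- s + 2 * s * x)))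
      = (\<integral>\<^sup>+ x. ennreal (indicator {-s..s} (- s + 2 * s * x) * h (- s + 2 * s * x)) \<partial>lborel)"
    by (subst nn_integral_has_integral_lebesgue[symmetric])
       (use s in \<open>auto intro!: nn_integral_cong simp: h_def indicator_def zero_le_mult_iff\<close>)
  also have "\<dots> = ennreal (1 / (2 * s)) * (\<integral>\<^sup>+ X. ennreal (indicator {-s..s} X * h X) \<partial>lborel)"
    using nn_integral_real_affine[of "\<lambda>X. ennreal (indicator {-s..s} X * h X)" "2 * s" "- s"] s
    by (simp add: ennreal_mult[symmetric] mult.assoc[symmetric])
  finally have integral_eq: "ennreal (integral {0..1} (\<lambda>x. h (- s + 2 * s * x)))
      = ennreal (1 / (2 * s)) * (\<integral>\<^sup>+ X. ennreal (indicator {-s..s} X * h X) \<partial>lborel)" .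
  have "cmod (b - a) = 2 * s"
    using s e by (simp add: a_def b_def norm_mult)
  then have "cmod (contour_integral (linepath a b) (\<lambda>w. G w / (w - z)))
      \<le> 2 * integral {0..1} (\<lambda>x. h (- s + 2 * s * x))"
    using norm_contour_integral_linepath_div_le[of a b G s z] continuous_on_subset[OF contG] far s
    unfolding a_def[symmetric] b_def[symmetric] by (simp add: line h_def)
  then have "ennreal (cmod (contour_integral (linepath a b) (\<lambda>w. G w / (w - z))))
      \<le> ennreal (2 * integral {0..1} (\<lambda>x. h (- s + 2 * s * x)))"
    by (rule ennreal_leI)
  also have "\<dots> = ennreal 2 * ennreal (integral {0..1} (\<lambda>x. h (- s + 2 * s * x)))"
    by (simp add: ennreal_mult')
  also have "\<dots> = ennreal (1 / s) * (\<integral>\<^sup>+ X. ennreal (indicator {-s..s} X * h X) \<partial>lborel)"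
  proof -
    have "ennreal 2 * ennreal (1 / (2 * s)) = ennreal (1 / s)"
      using s by (simp add: ennreal_mult'[symmetric] del: ennreal_numeral)
    then show ?thesis
      unfolding integral_eq mult.assoc[symmetric] by simp
  qed
  finally show ?thesis
    by (simp add: a_def b_def h_def)
qed

lemma Cauchy_formula_square_sides:
  fixes G :: "complex \<Rightarrow> complex" and z :: complex and s :: real
  assumes hol: "G holomorphic_on UNIV" and s: "s > 0"
  defines "a1 \<equiv> z + Complex (-s) (-s)" and "a2 \<equiv> z + Complex s (-s)"
    and "a3 \<equiv> z + Complex s s" and "a4 \<equiv> z + Complex (-s) s"
  shows "2 * pi * \<i> * G z =
      contour_integral (linepath a1 a2) (\<lambda>w. G w / (w - z))
    + contour_integral (linepath a2 a3) (\<lambda>w. G w / (w - z))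
    + contour_integral (linepath a3 a4) (\<lambda>w. G w / (w - z))
    + contour_integral (linepath a4 a1) (\<lambda>w. G w / (w - z))"
    and "\<And>w. w \<in> path_image (rectpath a1 a3) \<Longrightarrow> s \<le> cmod (w - z)"
    and "rectpath a1 a3 = linepath a1 a2 +++ linepath a2 a3 +++ linepath a3 a4 +++ linepath a4 a1"
proof -
  define f where "f = (\<lambda>w. G w / (w - z))"
  have le13: "Re a1 \<le> Re a3" "Im a1 \<le> Im a3" and z_box: "z \<in> box a1 a3"
    using s by (auto simp: a1_def a3_def in_box_complex_iff)
  show rect: "rectpath a1 a3 = linepath a1 a2 +++ linepath a2 a3 +++ linepath a3 a4 +++ linepath a4 a1"
  proof -
    have "Complex (Re a3) (Im a1) = a2" "Complex (Re a1) (Im a3) = a4"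
      by (simp_all add: a1_def a2_def a3_def a4_def complex_eq_iff)
    then show ?thesis
      by (simp add: rectpath_def Let_def)
  qed
  show far: "s \<le> cmod (w - z)" if "w \<in> path_image (rectpath a1 a3)" for w
    using that abs_Re_le_cmod[of "w - z"] abs_Im_le_cmod[of "w - z"]
    unfolding path_image_rectpath_cbox_minus_box[OF le13]
    by (auto simp: a1_def a3_def in_box_complex_iff in_cbox_complex_iff)
  have "f contour_integrable_on linepath u v"
    if "closed_segment u v \<subseteq> path_image (rectpath a1 a3)" for u v
  proof (rule contour_integrable_continuous_linepath)
    have "z \<notin> closed_segment u v"
      using that far[of z] s by auto
    then show "continuous_on (closed_segment u v) f"
      unfolding f_def using hol holomorphic_on_imp_continuous_on
      by (intro continuous_intros) (auto intro: continuous_on_subset)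
  qed
  then have "f contour_integrable_on linepath a1 a2" "f contour_integrable_on linepath a2 a3"
    "f contour_integrable_on linepath a3 a4" "f contour_integrable_on linepath a4 a1"
    by (simp_all add: rect path_image_join le_supI1 le_supI2)
  then have "contour_integral (rectpath a1 a3) f = contour_integral (linepath a1 a2) f
      + contour_integral (linepath a2 a3) f + contour_integral (linepath a3 a4) f
      + contour_integral (linepath a4 a1) f"
    by (simp add: rect contour_integrable_joinI valid_path_join)
  moreover have "(f has_contour_integral (2 * pi * \<i> * G z)) (rectpath a1 a3)"
    using Cauchy_integral_formula_convex_simple[of UNIV G z "rectpath a1 a3"] hol z_box
      winding_number_rectpath[OF z_box] path_image_rectpath_inter_box[OF le13]
    by (auto simp: f_def)
  ultimately show "2 * pi * \<i> * G z = contour_integral (linepath a1 a2) f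
      + contour_integral (linepath a2 a3) f + contour_integral (linepath a3 a4) f
      + contour_integral (linepath a4 a1) f"
    using contour_integral_unique by metis
qed

lemma Cauchy_estimate_square_sides:
  fixes G :: "complex \<Rightarrow> complex"
  assumes hol: "G holomorphic_on UNIV" and s: "s > 0"
  shows "ennreal (2 * pi * cmod (G z)) \<le> ennreal (1 / s) *
     ((\<integral>\<^sup>+ X. ennreal (indicator {-s..s} X * cmod (G (z + Complex X (-s)))) \<partial>lborel)
    + (\<integral>\<^sup>+ X. ennreal (indicator {-s..s} X * cmod (G (z + Complex s X))) \<partial>lborel)
    + (\<integral>\<^sup>+ X. ennreal (indicator {-s..s} X * cmod (G (z + Complex X s))) \<partial>lborel)
    + (\<integral>\<^sup>+ X. ennreal (indicator {-s..s} X * cmod (G (z + Complex (-s) X))) \<partial>lborel))"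
proof -
  define a1 a2 a3 a4 where "a1 = z + Complex (-s) (-s)" and "a2 = z + Complex s (-s)"
    and "a3 = z + Complex s s" and "a4 = z + Complex (-s) s"
  define f where "f = (\<lambda>w. G w / (w - z))"
  note sides = Cauchy_formula_square_sides[OF hol s, where z = z, folded a1_def a2_def a3_def a4_def]
  define side where "side = (\<lambda>m e. \<integral>\<^sup>+ X. ennreal (indicator {-s..s} X * cmod (G (m + of_real X * e))) \<partial>lborel)"
  have bound: "ennreal (cmod (contour_integral (linepath u v) f)) \<le> ennreal (1 / s) * side m e"
    if "cmod e = 1" "u = m - of_real s * e" "v = m + of_real s * e"
      "closed_segment u v \<subseteq> path_image (rectpath a1 a3)" for u v m e
    unfolding f_def side_def that(2,3)
    by (rule norm_contour_integral_segment_le)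
       (use s that sides(2) hol holomorphic_on_imp_continuous_on in auto)
  have "ennreal (cmod (contour_integral (linepath u v) f)) \<le> ennreal (1 / s) * side m e"
    if "cmod e = 1" "v = m - of_real s * e" "u = m + of_real s * e"
      "closed_segment u v \<subseteq> path_image (rectpath a1 a3)" for u v m e
    using bound[of e v m u] that contour_integral_reversepath[of "linepath v u" f]
    by (simp add: closed_segment_commute)
  note bound' = this
  have in_rect: "closed_segment a1 a2 \<subseteq> path_image (rectpath a1 a3)"
    "closed_segment a2 a3 \<subseteq> path_image (rectpath a1 a3)"
    "closed_segment a3 a4 \<subseteq> path_image (rectpath a1 a3)"
    "closed_segment a4 a1 \<subseteq> path_image (rectpath a1 a3)"
    by (auto simp: sides(3) path_image_join)
  have "2 * pi * cmod (G z) = cmod (2 * pi * \<i> * G z)"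
    by (simp add: norm_mult)
  also have "\<dots> \<le> cmod (contour_integral (linepath a1 a2) f) + cmod (contour_integral (linepath a2 a3) f)
      + cmod (contour_integral (linepath a3 a4) f) + cmod (contour_integral (linepath a4 a1) f)"
    unfolding sides(1) f_def by (intro order_trans[OF norm_triangle_ineq] add_mono order_refl)
  finally have "ennreal (2 * pi * cmod (G z)) \<le> ennreal (cmod (contour_integral (linepath a1 a2) f))
      + ennreal (cmod (contour_integral (linepath a2 a3) f))
      + ennreal (cmod (contour_integral (linepath a3 a4) f))
      + ennreal (cmod (contour_integral (linepath a4 a1) f))"
    by (simp add: ennreal_plus[symmetric] del: ennreal_plus)
  also have "\<dots> \<le> ennreal (1 / s) * side (z - \<i> * s) 1 + ennreal (1 / s) * side (z + s) \<i>
      + ennreal (1 / s) * side (z + \<i> * s) 1 + ennreal (1 / s) * side (z - s) \<i>"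
    by (intro add_mono bound bound' in_rect)
       (simp_all add: a1_def a2_def a3_def a4_def complex_eq_iff)
  moreover have "side (z - \<i> * s) 1 = (\<integral>\<^sup>+ X. ennreal (indicator {-s..s} X * cmod (G (z + Complex X (-s)))) \<partial>lborel)"
    "side (z + s) \<i> = (\<integral>\<^sup>+ X. ennreal (indicator {-s..s} X * cmod (G (z + Complex s X))) \<partial>lborel)"
    "side (z + \<i> * s) 1 = (\<integral>\<^sup>+ X. ennreal (indicator {-s..s} X * cmod (G (z + Complex X s))) \<partial>lborel)"
    "side (z - s) \<i> = (\<integral>\<^sup>+ X. ennreal (indicator {-s..s} X * cmod (G (z + Complex (-s) X))) \<partial>lborel)"
    unfolding side_def Complex_eq by (simp_all add: algebra_simps)
  ultimately show ?thesis
    by (simp add: distrib_left)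
qed

lemma nn_integral_reflect_le:
  fixes H :: "real \<Rightarrow> ennreal" and c :: real
  assumes [measurable]: "H \<in> borel_measurable borel" and c: "\<bar>c\<bar> = 1"
  shows "(\<integral>\<^sup>+ s. indicator {d/2..d} s * H (c * s) \<partial>lborel) \<le> (\<integral>\<^sup>+ s. indicator {-d..d} s * H s \<partial>lborel)"
proof -
  have "c * c = 1" "c \<noteq> 0"
    using c by (auto simp: abs_if split: if_splits)
  then have "(\<integral>\<^sup>+ s. indicator {d/2..d} s * H (c * s) \<partial>lborel)
      = (\<integral>\<^sup>+ t. indicator {d/2..d} (c * t) * H t \<partial>lborel)"
    using nn_integral_real_affine[of "\<lambda>t. indicator {d/2..d} (c * t) * H t" c 0] c
    by (simp add: mult.assoc[symmetric])
  also have "\<dots> \<le> (\<integral>\<^sup>+ t. indicator {-d..d} t * H t \<partial>lborel)"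
    using c by (intro nn_integral_mono mult_right_mono) (auto simp: indicator_def abs_if split: if_splits)
  finally show ?thesis .
qed

lemma nn_integral_strips_le_square:
  fixes F :: "real \<Rightarrow> real \<Rightarrow> ennreal" and c d :: real
  assumes [measurable]: "(\<lambda>(x, y). F x y) \<in> borel_measurable (lborel \<Otimes>\<^sub>M lborel)" and c: "\<bar>c\<bar> = 1"
  defines "SQ \<equiv> \<integral>\<^sup>+ x. \<integral>\<^sup>+ y. indicator {-d..d} x * indicator {-d..d} y * F x y \<partial>lborel \<partial>lborel"
  shows "(\<integral>\<^sup>+ s. indicator {d/2..d} s * (\<integral>\<^sup>+ X. indicator {-d..d} X * F (c * s) X \<partial>lborel) \<partial>lborel) \<le> SQ"
    and "(\<integral>\<^sup>+ s. indicator {d/2..d} s * (\<integral>\<^sup>+ X. indicator {-d..d} X * F X (c * s) \<partial>lborel) \<partial>lborel) \<le> SQ"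
proof -
  show "(\<integral>\<^sup>+ s. indicator {d/2..d} s * (\<integral>\<^sup>+ X. indicator {-d..d} X * F (c * s) X \<partial>lborel) \<partial>lborel) \<le> SQ"
    using nn_integral_reflect_le[of "\<lambda>x. \<integral>\<^sup>+ X. indicator {-d..d} X * F x X \<partial>lborel" c d] c
    unfolding SQ_def by (simp add: nn_integral_cmult[symmetric] mult.assoc)
  have "SQ = (\<integral>\<^sup>+ y. \<integral>\<^sup>+ x. indicator {-d..d} y * (indicator {-d..d} x * F x y) \<partial>lborel \<partial>lborel)"
    unfolding SQ_def
    using lborel_pair.Fubini'[of "\<lambda>x y. indicator {-d..d} x * indicator {-d..d} y * F x y"]
    by (simp add: mult_ac)
  then show "(\<integral>\<^sup>+ s. indicator {d/2..d} s * (\<integral>\<^sup>+ X. indicator {-d..d} X * F X (c * s) \<partial>lborel) \<partial>lborel) \<le> SQ"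
    using nn_integral_reflect_le[of "\<lambda>y. \<integral>\<^sup>+ X. indicator {-d..d} X * F X y \<partial>lborel" c d] c
    by (simp add: nn_integral_cmult[symmetric])
qed

lemma Cauchy_estimate_square_frame:
  fixes G :: "complex \<Rightarrow> complex" and z :: complex and d s :: real
  assumes hol: "G holomorphic_on UNIV" and s: "s \<in> {d/2..d}" and d: "d > 0"
  defines "hside \<equiv> \<lambda>t. \<integral>\<^sup>+ X. indicator {-d..d} X * ennreal (cmod (G (z + Complex X t))) \<partial>lborel"
    and "vside \<equiv> \<lambda>t. \<integral>\<^sup>+ X. indicator {-d..d} X * ennreal (cmod (G (z + Complex t X))) \<partial>lborel"
  shows "ennreal (2 * pi * cmod (G z)) \<le> ennreal (2 / d) * (hside (-s) + vside s + hside s + vside (-s))"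
proof -
  have "s > 0"
    using s d by simp
  then have "ennreal (2 * pi * cmod (G z)) \<le> ennreal (1 / s) *
     ((\<integral>\<^sup>+ X. ennreal (indicator {-s..s} X * cmod (G (z + Complex X (-s)))) \<partial>lborel)
    + (\<integral>\<^sup>+ X. ennreal (indicator {-s..s} X * cmod (G (z + Complex s X))) \<partial>lborel)
    + (\<integral>\<^sup>+ X. ennreal (indicator {-s..s} X * cmod (G (z + Complex X s))) \<partial>lborel)
    + (\<integral>\<^sup>+ X. ennreal (indicator {-s..s} X * cmod (G (z + Complex (-s) X))) \<partial>lborel))"
    by (rule Cauchy_estimate_square_sides[OF hol])
  also have "\<dots> \<le> ennreal (1 / s) * (hside (-s) + vside s + hside s + vside (-s))"
    unfolding hside_def vside_def using s
    by (intro mult_left_mono add_mono nn_integral_mono) (auto simp: indicator_def)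
  also have "\<dots> \<le> ennreal (2 / d) * (hside (-s) + vside s + hside s + vside (-s))"
    using s d by (intro mult_right_mono ennreal_leI) (auto simp: field_simps)
  finally show ?thesis .
qed

lemma norm_le_square_mean:
  fixes G :: "complex \<Rightarrow> complex"
  assumes hol: "G holomorphic_on UNIV" and d: "d > 0"
  shows "ennreal (cmod (G z))
      \<le> ennreal (8 / (pi * d\<^sup>2)) * (\<integral>\<^sup>+ w. indicator (closed_square z d) w * ennreal (cmod (G w)) \<partial>lborel)"
proof -
  have [measurable]: "G \<in> borel_measurable borel"
    using hol holomorphic_on_imp_continuous_on borel_measurable_continuous_onI by blast
  define F where "F = (\<lambda>x y. ennreal (cmod (G (z + Complex x y))))"
  have F_measurable [measurable]: "(\<lambda>(x, y). F x y) \<in> borel_measurable (lborel \<Otimes>\<^sub>M lborel)"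
    unfolding F_def by measurable
  define I J :: "real \<Rightarrow> ennreal" where "I = indicator {d/2..d}" and "J = indicator {-d..d}"
  define hside vside where "hside = (\<lambda>t. \<integral>\<^sup>+ X. J X * F X t \<partial>lborel)"
    and "vside = (\<lambda>t. \<integral>\<^sup>+ X. J X * F t X \<partial>lborel)"
  have [measurable]: "I \<in> borel_measurable borel" "hside \<in> borel_measurable borel" "vside \<in> borel_measurable borel"
    unfolding I_def J_def hside_def vside_def by measurable
  define SQ where "SQ = (\<integral>\<^sup>+ x. \<integral>\<^sup>+ y. J x * J y * F x y \<partial>lborel \<partial>lborel)"
  have strips: "(\<integral>\<^sup>+ s. I s * hside (c * s) \<partial>lborel) \<le> SQ" "(\<integral>\<^sup>+ s. I s * vside (c * s) \<partial>lborel) \<le> SQ"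
    if "\<bar>c\<bar> = 1" for c
    using nn_integral_strips_le_square[OF F_measurable that, of d]
    unfolding I_def J_def hside_def vside_def SQ_def by simp_all
  have pointwise: "ennreal (2 * pi * cmod (G z)) * I s
      \<le> ennreal (2 / d) * (I s * hside (-s) + I s * vside s + I s * hside s + I s * vside (-s))" for s
    using Cauchy_estimate_square_frame[OF hol _ d, of s z]
    by (cases "s \<in> {d/2..d}") (simp_all add: I_def J_def hside_def vside_def F_def)
  have "ennreal (2 * pi * cmod (G z)) * ennreal (d / 2) = (\<integral>\<^sup>+ s. ennreal (2 * pi * cmod (G z)) * I s \<partial>lborel)"
    unfolding I_def using d by (subst nn_integral_cmult_indicator) auto
  also have "\<dots> \<le> (\<integral>\<^sup>+ s. ennreal (2 / d) * (I s * hside (-s) + I s * vside s + I s * hside s + I s * vside (-s)) \<partial>lborel)"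
    by (intro nn_integral_mono pointwise)
  also have "\<dots> = ennreal (2 / d) * ((\<integral>\<^sup>+ s. I s * hside (-1 * s) \<partial>lborel) + (\<integral>\<^sup>+ s. I s * vside (1 * s) \<partial>lborel)
      + (\<integral>\<^sup>+ s. I s * hside (1 * s) \<partial>lborel) + (\<integral>\<^sup>+ s. I s * vside (-1 * s) \<partial>lborel))"
    by (simp add: nn_integral_cmult nn_integral_add)
  also have "\<dots> \<le> ennreal (2 / d) * (SQ + SQ + SQ + SQ)"
    by (intro mult_left_mono add_mono strips) auto
  also have "SQ + SQ + SQ + SQ = (1 + 1 + 1 + 1) * SQ"
    by (simp only: distrib_right mult_1_left)
  also have "ennreal (2 / d) * ((1 + 1 + 1 + 1) * SQ) = ennreal (8 / d) * SQ"
    using ennreal_mult'[of "2 / d" 4] d by (simp add: mult.assoc[symmetric])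
  finally have "ennreal (pi * d * cmod (G z)) \<le> ennreal (8 / d) * SQ"
    using d by (simp add: ennreal_mult'[symmetric] ennreal_mult[symmetric] mult_ac)
  then have "ennreal (1 / (pi * d)) * ennreal (pi * d * cmod (G z)) \<le> ennreal (1 / (pi * d)) * (ennreal (8 / d) * SQ)"
    by (rule mult_left_mono) simp
  moreover have "SQ = (\<integral>\<^sup>+ w. indicator (closed_square z d) w * ennreal (cmod (G w)) \<partial>lborel)"
    by (subst nn_integral_closed_square) (simp_all add: SQ_def J_def F_def)
  ultimately show ?thesis
    using d by (simp add: ennreal_mult[symmetric] mult.assoc[symmetric] power2_eq_square)
qed

section \<open>Sub-mean value estimates\<close>

lemma powr_rescaling_identity:
  fixes a e q :: real
  assumes a: "0 < a" and e: "e * q = 2"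
  shows "a powr e / a\<^sup>2 * (a / 2) powr (- e * (1 - q)) = 2 powr (e * (1 - q))"
proof -
  define y where "y = e * (1 - q)"
  have "a powr e * a powr (- y) = a powr 2"
    using e by (simp add: y_def powr_add[symmetric] algebra_simps)
  then have exponent: "a powr e * a powr (- y) = a\<^sup>2"
    using a by (simp add: powr_numeral)
  have "(a / 2) powr (- y) = a powr (- y) * 2 powr y"
    using a by (simp add: powr_divide powr_minus_divide)
  then have "a powr e / a\<^sup>2 * (a / 2) powr (- y) = (a powr e * a powr (- y)) * 2 powr y / a\<^sup>2"
    by (simp only: times_divide_eq_left mult.assoc)
  also have "\<dots> = 2 powr y"
    using a unfolding exponent by simp
  finally show ?thesis
    by (simp add: y_def)
qed

lemma powr_le_of_le_mult_powr:
  fixes x \<Phi> D q :: real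
  assumes "0 \<le> x" "x \<le> \<Phi>" "0 < q" "0 \<le> D" and \<Phi>: "\<Phi> \<le> D * \<Phi> powr (1 - q)"
  shows "x powr q \<le> D"
proof (cases "\<Phi> = 0")
  case True
  then show ?thesis
    using assms by simp
next
  case False
  then have "\<Phi> powr q * \<Phi> powr (1 - q) \<le> D * \<Phi> powr (1 - q)"
    using \<Phi> assms by (simp add: powr_add[symmetric])
  then have "\<Phi> powr q \<le> D"
    using False assms by simp
  moreover have "x powr q \<le> \<Phi> powr q"
    using assms by (intro powr_mono2) auto
  ultimately show ?thesis
    by simp
qed

text \<open>Hardy and Littlewood's absorption argument: the weighted supremum
  \<open>\<Phi> = sup (1 - r)^(2/q) M r\<close> satisfies \<open>\<Phi> \<le> D \<Phi>^(1-q)\<close>.\<close>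

lemma absorption_bound:
  fixes M :: "real \<Rightarrow> real" and q C B :: real
  assumes q: "0 < q" "q \<le> 1" and M_nonneg: "\<And>r. r \<in> {0..<1} \<Longrightarrow> 0 \<le> M r"
    and M_bounded: "\<And>r. r \<in> {0..<1} \<Longrightarrow> M r \<le> B" and C: "0 \<le> C"
    and recursive: "\<And>r. r \<in> {0..<1} \<Longrightarrow> M r \<le> C / (1 - r)\<^sup>2 * M ((1 + r) / 2) powr (1 - q)"
  shows "M 0 powr q \<le> C * 2 powr (2 / q * (1 - q))"
proof -
  define e where "e = 2 / q"
  have e: "e > 0" "e * q = 2"
    using q by (auto simp: e_def)
  define \<Phi> where "\<Phi> = (SUP r\<in>{0..<1}. (1 - r) powr e * M r)"
  have "bdd_above ((\<lambda>r. (1 - r) powr e * M r) ` {0..<1})"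
  proof (rule bdd_aboveI2)
    fix r :: real
    assume r: "r \<in> {0..<1}"
    then have "(1 - r) powr e * M r \<le> 1 * M r"
      using e M_nonneg[OF r] by (intro mult_right_mono powr_le1) auto
    then show "(1 - r) powr e * M r \<le> B"
      using M_bounded[OF r] by simp
  qed
  then have le_\<Phi>: "(1 - r) powr e * M r \<le> \<Phi>" if "r \<in> {0..<1}" for r
    unfolding \<Phi>_def using that by (intro cSUP_upper)
  have M0: "M 0 \<le> \<Phi>"
    using le_\<Phi>[of 0] by simp
  have \<Phi>_nonneg: "0 \<le> \<Phi>"
    using M0 M_nonneg[of 0] by simp
  define D where "D = C * 2 powr (e * (1 - q))"
  have "(1 - r) powr e * M r \<le> D * \<Phi> powr (1 - q)" if r: "r \<in> {0..<1}" for r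
  proof -
    define a where "a = 1 - r"
    have a: "0 < a" "a \<le> 1"
      using r by (auto simp: a_def)
    have "(a / 2) powr e * M ((1 + r) / 2) \<le> \<Phi>"
      using le_\<Phi>[of "(1 + r) / 2"] r by (simp add: a_def field_simps)
    then have "M ((1 + r) / 2) \<le> \<Phi> * (a / 2) powr (- e)"
      using a by (simp add: powr_minus field_simps)
    then have "M ((1 + r) / 2) powr (1 - q) \<le> (\<Phi> * (a / 2) powr (- e)) powr (1 - q)"
      using M_nonneg[of "(1 + r) / 2"] r q by (intro powr_mono2) auto
    also have "\<dots> = \<Phi> powr (1 - q) * (a / 2) powr (- e * (1 - q))"
      using \<Phi>_nonneg a by (simp add: powr_mult powr_powr)
    finally have M_half: "M ((1 + r) / 2) powr (1 - q) \<le> \<Phi> powr (1 - q) * (a / 2) powr (- e * (1 - q))" .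
    have "a powr e * M r \<le> a powr e * (C / a\<^sup>2 * M ((1 + r) / 2) powr (1 - q))"
      using recursive[OF r] by (intro mult_left_mono) (auto simp: a_def)
    also have "\<dots> \<le> a powr e * (C / a\<^sup>2 * (\<Phi> powr (1 - q) * (a / 2) powr (- e * (1 - q))))"
      using M_half C by (intro mult_left_mono) auto
    also have "\<dots> = C * \<Phi> powr (1 - q) * (a powr e / a\<^sup>2 * (a / 2) powr (- e * (1 - q)))"
      by (simp add: mult_ac)
    also have "a powr e / a\<^sup>2 * (a / 2) powr (- e * (1 - q)) = 2 powr (e * (1 - q))"
      using a(1) e(2) by (rule powr_rescaling_identity)
    finally show ?thesis
      by (simp add: a_def D_def mult_ac)
  qed
  then have "\<Phi> \<le> D * \<Phi> powr (1 - q)"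
    unfolding \<Phi>_def by (intro cSUP_least) auto
  have "M 0 powr q \<le> D"
    using M0 M_nonneg[of 0] q C \<open>\<Phi> \<le> D * \<Phi> powr (1 - q)\<close>
    by (intro powr_le_of_le_mult_powr) (auto simp: D_def)
  then show ?thesis
    by (simp add: D_def e_def)
qed

lemma norm_le_square_mean_powr:
  fixes G :: "complex \<Rightarrow> complex" and q K :: real
  assumes hol: "G holomorphic_on UNIV" and q: "0 < q" "q \<le> 1" and d: "d > 0"
    and K: "\<And>v. v \<in> closed_square w d \<Longrightarrow> cmod (G v) \<le> K"
  shows "ennreal (cmod (G w)) \<le> ennreal (8 / (pi * d\<^sup>2) * K powr (1 - q)) *
      (\<integral>\<^sup>+ v. indicator (closed_square w d) v * ennreal (cmod (G v) powr q) \<partial>lborel)"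
proof -
  have [measurable]: "G \<in> borel_measurable borel"
    using hol holomorphic_on_imp_continuous_on borel_measurable_continuous_onI by blast
  have "indicator (closed_square w d) v * ennreal (cmod (G v))
      \<le> ennreal (K powr (1 - q)) * (indicator (closed_square w d) v * ennreal (cmod (G v) powr q))" for v
  proof (cases "v \<in> closed_square w d \<and> G v \<noteq> 0")
    case True
    then have "cmod (G v) = cmod (G v) powr q * cmod (G v) powr (1 - q)"
      by (simp add: powr_add[symmetric])
    also have "\<dots> \<le> cmod (G v) powr q * K powr (1 - q)"
      using K True q by (intro mult_left_mono powr_mono2) auto
    finally show ?thesis
      using True by (simp add: ennreal_mult'[symmetric] mult.commute ennreal_leI)
  qed auto
  then have "(\<integral>\<^sup>+ v. indicator (closed_square w d) v * ennreal (cmod (G v)) \<partial>lborel)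
      \<le> ennreal (K powr (1 - q)) *
        (\<integral>\<^sup>+ v. indicator (closed_square w d) v * ennreal (cmod (G v) powr q) \<partial>lborel)"
    by (subst nn_integral_cmult[symmetric]) (auto intro: nn_integral_mono)
  then have "ennreal (8 / (pi * d\<^sup>2)) *
      (\<integral>\<^sup>+ v. indicator (closed_square w d) v * ennreal (cmod (G v)) \<partial>lborel)
    \<le> ennreal (8 / (pi * d\<^sup>2)) * (ennreal (K powr (1 - q)) *
      (\<integral>\<^sup>+ v. indicator (closed_square w d) v * ennreal (cmod (G v) powr q) \<partial>lborel))"
    by (rule mult_left_mono) simp
  with norm_le_square_mean[OF hol d, of w] show ?thesis
    by (subst ennreal_mult') (auto simp: mult.assoc)
qed

lemma powr_norm_le_square_mean:
  fixes G :: "complex \<Rightarrow> complex" and q :: real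
  assumes hol: "G holomorphic_on UNIV" and q: "0 < q" "q \<le> 1"
  shows "ennreal (cmod (G z) powr q) \<le> ennreal (32 / pi * 2 powr (2 / q * (1 - q))) *
     (\<integral>\<^sup>+ w. indicator (closed_square z 1) w * ennreal (cmod (G w) powr q) \<partial>lborel)"
proof (cases "(\<integral>\<^sup>+ w. indicator (closed_square z 1) w * ennreal (cmod (G w) powr q) \<partial>lborel)"
    rule: ennreal_cases)
  case (real j)
  define M where "M = (\<lambda>r. Sup ((\<lambda>w. cmod (G w)) ` closed_square z r))"
  have "bdd_above ((\<lambda>w. cmod (G w)) ` closed_square z r)" for r
    using hol holomorphic_on_imp_continuous_on compact_closed_square
    by (intro bounded_imp_bdd_above compact_imp_bounded compact_continuous_image continuous_intros)
       (auto intro: continuous_on_subset)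
  then have M_upper: "cmod (G w) \<le> M r" if "w \<in> closed_square z r" for w r
    unfolding M_def using that by (intro cSup_upper) auto
  have centre: "z \<in> closed_square z r" if "r \<ge> 0" for r
    using that by (simp add: mem_closed_square)
  have M_least: "M r \<le> B" if "r \<ge> 0" "\<And>w. w \<in> closed_square z r \<Longrightarrow> cmod (G w) \<le> B" for r B
    unfolding M_def using that centre by (intro cSup_least) auto
  have M_nonneg: "0 \<le> M r" if "r \<ge> 0" for r
    using M_upper[OF centre[OF that]] norm_ge_zero order_trans by blast
  have "M r \<le> 32 / pi * j / (1 - r)\<^sup>2 * M ((1 + r) / 2) powr (1 - q)" if r: "r \<in> {0..<1}" for r
  proof (rule M_least)
    fix w
    assume w: "w \<in> closed_square z r"
    define d where "d = (1 - r) / 2"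
    have d: "d > 0"
      using r by (simp add: d_def)
    have subsquare: "closed_square w d \<subseteq> closed_square z ((1 + r) / 2)"
      "closed_square z ((1 + r) / 2) \<subseteq> closed_square z 1"
      using w r unfolding d_def by (auto simp: mem_closed_square abs_le_iff abs_if split: if_splits)
    have "ennreal (cmod (G w)) \<le> ennreal (8 / (pi * d\<^sup>2) * M ((1 + r) / 2) powr (1 - q)) *
        (\<integral>\<^sup>+ v. indicator (closed_square w d) v * ennreal (cmod (G v) powr q) \<partial>lborel)"
      using subsquare r by (intro norm_le_square_mean_powr[OF hol q d] M_upper) auto
    also have "\<dots> \<le> ennreal (8 / (pi * d\<^sup>2) * M ((1 + r) / 2) powr (1 - q)) * ennreal j"
      unfolding real(2)[symmetric] using subsquare
      by (intro mult_left_mono nn_integral_mono) (auto simp: indicator_def)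
    finally have "cmod (G w) \<le> 8 / (pi * d\<^sup>2) * M ((1 + r) / 2) powr (1 - q) * j"
      using real d by (simp add: ennreal_mult'[symmetric])
    then show "cmod (G w) \<le> 32 / pi * j / (1 - r)\<^sup>2 * M ((1 + r) / 2) powr (1 - q)"
      by (simp add: d_def power_divide mult_ac)
  qed (use r real in auto)
  then have "M 0 powr q \<le> 32 / pi * j * 2 powr (2 / q * (1 - q))"
    using M_nonneg M_upper real(1)
    by (intro absorption_bound[OF q, of M "M 1"])
       (auto intro!: M_least M_upper simp: mem_closed_square)
  moreover have "cmod (G z) powr q \<le> M 0 powr q"
    using M_upper[OF centre, of 0] q by (intro powr_mono2) auto
  ultimately show ?thesis
    using real by (simp add: ennreal_mult'[symmetric] mult_ac ennreal_leI)
qed auto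

text \<open>With \<open>q = p / \<lceil>p\<rceil>\<close> we have \<open>0 < q \<le> 1\<close> and \<open>|G|^p = |G^\<lceil>p\<rceil>|^q\<close>.\<close>

definition square_mean_const :: "real \<Rightarrow> real" where
  "square_mean_const p = (let q = p / real (nat \<lceil>p\<rceil>) in 32 / pi * 2 powr (2 / q * (1 - q)))"

lemma square_mean_const_pos: "square_mean_const p > 0"
  by (simp add: square_mean_const_def Let_def)

lemma powr_norm_le_square_mean_any:
  fixes G :: "complex \<Rightarrow> complex" and p :: real
  assumes hol: "G holomorphic_on UNIV" and p: "0 < p"
  shows "ennreal (cmod (G z) powr p) \<le> ennreal (square_mean_const p) *
     (\<integral>\<^sup>+ w. indicator (closed_square z 1) w * ennreal (cmod (G w) powr p) \<partial>lborel)"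
proof -
  define n where "n = nat \<lceil>p\<rceil>"
  define q where "q = p / real n"
  have n: "n \<ge> 1" "p \<le> real n"
    using p by (simp_all add: n_def le_nat_iff)
  have q: "0 < q" "q \<le> 1"
    using n p by (auto simp: q_def field_simps)
  have "cmod (G w ^ n) powr q = cmod (G w) powr p" for w
    using n by (cases "G w = 0") (simp_all add: norm_power powr_realpow[symmetric] powr_powr q_def)
  moreover have "(\<lambda>w. G w ^ n) holomorphic_on UNIV"
    using hol by (intro holomorphic_intros)
  ultimately show ?thesis
    using powr_norm_le_square_mean[of "\<lambda>w. G w ^ n" q z] q
    by (simp add: square_mean_const_def Let_def flip: n_def q_def)
qed

lemma exp_Re_cnj_diff_le:
  fixes z w :: complex and \<alpha> :: real
  assumes w: "w \<in> closed_square z 1" and \<alpha>: "0 \<le> \<alpha>"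
  shows "exp (- 2 * \<alpha> * Re (cnj z * (w - z)))
    \<le> exp (- \<alpha> * (cmod w)\<^sup>2) * exp (\<alpha> * (cmod z)\<^sup>2) * exp (2 * \<alpha>)"
proof -
  define R where "R = Re (cnj z * (w - z))"
  have "(cmod w)\<^sup>2 = (cmod z)\<^sup>2 + 2 * R + (cmod (w - z))\<^sup>2"
    unfolding cmod_power2 R_def by (simp add: power2_eq_square algebra_simps)
  then have "\<alpha> * (cmod w)\<^sup>2 = \<alpha> * (cmod z)\<^sup>2 + 2 * \<alpha> * R + \<alpha> * (cmod (w - z))\<^sup>2"
    by (simp add: algebra_simps)
  moreover have "\<alpha> * (cmod (w - z))\<^sup>2 \<le> \<alpha> * 2"
    using norm_diff_squared_le_of_in_closed_square[OF w] \<alpha> by (rule mult_left_mono)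
  ultimately have "- 2 * \<alpha> * R \<le> - \<alpha> * (cmod w)\<^sup>2 + \<alpha> * (cmod z)\<^sup>2 + 2 * \<alpha>"
    by linarith
  then show ?thesis
    unfolding R_def[symmetric] by (simp add: exp_add[symmetric])
qed

lemma weighted_powr_norm_le_square_mean:
  fixes f :: "complex \<Rightarrow> complex" and p \<alpha> :: real
  assumes hol: "f holomorphic_on UNIV" and p: "0 < p" and \<alpha>: "0 \<le> \<alpha>"
  shows "ennreal (cmod (f z) powr p * exp (- \<alpha> * (cmod z)\<^sup>2))
    \<le> ennreal (square_mean_const p * exp (2 * \<alpha>)) *
      (\<integral>\<^sup>+ w. indicator (closed_square z 1) w * ennreal (cmod (f w) powr p * exp (- \<alpha> * (cmod w)\<^sup>2)) \<partial>lborel)"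
proof -
  define G where "G = (\<lambda>w. f w * exp (- of_real (2 * \<alpha> / p) * cnj z * (w - z)))"
  have [measurable]: "f \<in> borel_measurable borel"
    using hol holomorphic_on_imp_continuous_on borel_measurable_continuous_onI by blast
  have norm_G: "cmod (G w) powr p = cmod (f w) powr p * exp (- 2 * \<alpha> * Re (cnj z * (w - z)))" for w
  proof -
    have "cmod (G w) = cmod (f w) * exp (- (2 * \<alpha> / p) * Re (cnj z * (w - z)))"
      by (simp add: G_def norm_mult norm_exp_eq_Re mult.assoc)
    moreover have "exp (- (2 * \<alpha> / p) * Re (cnj z * (w - z))) powr p = exp (- 2 * \<alpha> * Re (cnj z * (w - z)))"
      using p by (simp add: powr_def)
    ultimately show ?thesis
      by (simp add: powr_mult)
  qed
  define I where "I = (\<integral>\<^sup>+ w. indicator (closed_square z 1) w *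
      ennreal (cmod (f w) powr p * exp (- \<alpha> * (cmod w)\<^sup>2)) \<partial>lborel)"
  have "indicator (closed_square z 1) w * ennreal (cmod (G w) powr p)
      \<le> ennreal (exp (\<alpha> * (cmod z)\<^sup>2) * exp (2 * \<alpha>)) *
        (indicator (closed_square z 1) w * ennreal (cmod (f w) powr p * exp (- \<alpha> * (cmod w)\<^sup>2)))" for w
  proof (cases "w \<in> closed_square z 1")
    case True
    then have "exp (- 2 * \<alpha> * Re (cnj z * (w - z)))
        \<le> exp (- \<alpha> * (cmod w)\<^sup>2) * exp (\<alpha> * (cmod z)\<^sup>2) * exp (2 * \<alpha>)"
      using \<alpha> by (rule exp_Re_cnj_diff_le)
    then show ?thesis
      using True unfolding norm_G
      by (simp add: ennreal_mult'[symmetric] ennreal_leI mult_left_mono mult_ac)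
  qed simp
  then have integral_bound: "(\<integral>\<^sup>+ w. indicator (closed_square z 1) w * ennreal (cmod (G w) powr p) \<partial>lborel)
      \<le> ennreal (exp (\<alpha> * (cmod z)\<^sup>2) * exp (2 * \<alpha>)) * I"
    unfolding I_def by (subst nn_integral_cmult[symmetric]) (auto intro: nn_integral_mono)
  have "G holomorphic_on UNIV"
    unfolding G_def using hol by (intro holomorphic_intros)
  then have "ennreal (cmod (f z) powr p) \<le> ennreal (square_mean_const p) *
      (\<integral>\<^sup>+ w. indicator (closed_square z 1) w * ennreal (cmod (G w) powr p) \<partial>lborel)"
    using powr_norm_le_square_mean_any[of G p z] p by (simp add: G_def)
  also have "\<dots> \<le> ennreal (square_mean_const p) * (ennreal (exp (\<alpha> * (cmod z)\<^sup>2) * exp (2 * \<alpha>)) * I)"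
    by (rule mult_left_mono[OF integral_bound]) simp
  finally have "ennreal (exp (- \<alpha> * (cmod z)\<^sup>2)) * ennreal (cmod (f z) powr p)
      \<le> ennreal (exp (- \<alpha> * (cmod z)\<^sup>2)) *
        (ennreal (square_mean_const p) * (ennreal (exp (\<alpha> * (cmod z)\<^sup>2) * exp (2 * \<alpha>)) * I))"
    by (rule mult_left_mono) simp
  also have "\<dots> = ennreal (exp (- \<alpha> * (cmod z)\<^sup>2) * square_mean_const p * (exp (\<alpha> * (cmod z)\<^sup>2) * exp (2 * \<alpha>))) * I"
    using square_mean_const_pos[of p] by (simp add: ennreal_mult mult.assoc)
  also have "exp (- \<alpha> * (cmod z)\<^sup>2) * square_mean_const p * (exp (\<alpha> * (cmod z)\<^sup>2) * exp (2 * \<alpha>))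
      = square_mean_const p * exp (2 * \<alpha>)"
    by (simp add: exp_minus field_simps)
  finally show ?thesis
    unfolding I_def by (simp add: ennreal_mult mult.commute)
qed

section \<open>Squares centred on a circle\<close>

lemma half_le_sin:
  assumes "0 \<le> a" "a \<le> pi / 3"
  shows "a / 2 \<le> sin a"
proof -
  have "sin 0 - 0 / 2 \<le> sin a - a / 2"
  proof (rule DERIV_nonneg_imp_increasing_open[OF assms(1)])
    fix x
    assume x: "0 < x" "x < a"
    then have "cos (pi / 3) \<le> cos x"
      using assms by (intro cos_monotone_0_pi_le) auto
    then show "\<exists>y. ((\<lambda>x. sin x - x / 2) has_real_derivative y) (at x) \<and> 0 \<le> y"
      by (auto simp: cos_60 intro!: derivative_eq_intros)
  qed (auto intro!: continuous_intros)
  then show ?thesis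
    by simp
qed

lemma abs_le_of_one_minus_cos_le:
  fixes y R :: real
  assumes y: "\<bar>y\<bar> \<le> pi" and R: "R \<ge> 4" and cos_y: "1 - cos y \<le> 2 / R\<^sup>2"
  shows "\<bar>y\<bar> \<le> 4 / R"
proof -
  define a where "a = \<bar>y\<bar>"
  have a: "0 \<le> a" "a \<le> pi" "cos a = cos y"
    using y by (auto simp: a_def abs_if)
  have "2 / R\<^sup>2 \<le> 2 / 4\<^sup>2"
    using R by (intro divide_left_mono power_mono) auto
  then have cos_a: "cos a \<ge> 7 / 8"
    using cos_y a by simp
  then have "a \<le> pi / 3"
    using a cos_monotone_0_pi_le[of "pi / 3" a] by (force simp: cos_60)
  have "(sin a)\<^sup>2 = (1 - cos a) * (1 + cos a)"
    by (simp add: sin_squared_eq power2_eq_square algebra_simps)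
  also have "\<dots> \<le> 2 / R\<^sup>2 * 2"
    using cos_y a cos_a by (intro mult_mono) auto
  also have "\<dots> = (2 / R)\<^sup>2"
    by (simp add: power2_eq_square)
  finally have "sin a \<le> 2 / R"
    by (rule power2_le_imp_le) (use R in auto)
  with half_le_sin[OF a(1) \<open>a \<le> pi / 3\<close>] show ?thesis
    by (simp add: a_def)
qed

lemma one_minus_cos_diff_Arg_le:
  fixes R t :: real and w :: complex
  assumes R: "R \<ge> 4" and near: "(cmod (w - of_real R * cis t))\<^sup>2 \<le> 2"
  shows "1 - cos (t - Arg w) \<le> 2 / R\<^sup>2"
proof -
  define m u where "m = cmod w" and "u = Arg w"
  have w: "w = of_real m * cis u"
    unfolding m_def u_def by (metis rcis_cmod_Arg rcis_def)
  have "cmod (w - of_real R * cis t) \<le> 2"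
    by (rule power2_le_imp_le) (use near in auto)
  moreover have "cmod (of_real R * cis t) \<le> cmod w + cmod (w - of_real R * cis t)"
    by (metis norm_triangle_sub add.commute norm_minus_commute)
  then have "R \<le> m + cmod (w - of_real R * cis t)"
    using R by (simp add: m_def norm_mult)
  ultimately have "R / 2 \<le> m"
    using R by linarith
  have "(cmod (w - of_real R * cis t))\<^sup>2 = (m * cos u - R * cos t)\<^sup>2 + (m * sin u - R * sin t)\<^sup>2"
    unfolding w cmod_power2 by simp
  also have "\<dots> = m\<^sup>2 * ((sin u)\<^sup>2 + (cos u)\<^sup>2) + R\<^sup>2 * ((sin t)\<^sup>2 + (cos t)\<^sup>2)
      - 2 * m * R * (cos t * cos u + sin t * sin u)"
    by algebra
  also have "\<dots> = (m - R)\<^sup>2 + 2 * m * R * (1 - cos (t - u))"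
    unfolding sin_cos_squared_add cos_diff by (simp add: power2_eq_square algebra_simps)
  finally have "m * R * (1 - cos (t - u)) \<le> 1"
    using near zero_le_power2[of "m - R"] by linarith
  moreover have "R / 2 * R * (1 - cos (t - u)) \<le> m * R * (1 - cos (t - u))"
    using \<open>R / 2 \<le> m\<close> R by (intro mult_right_mono) auto
  ultimately have "R\<^sup>2 * (1 - cos (t - u)) \<le> 2"
    by (simp add: power2_eq_square)
  then show ?thesis
    using R by (simp add: u_def pos_le_divide_eq mult.commute)
qed

lemma emeasure_angles_near_le:
  fixes R :: real and w :: complex
  assumes R: "R \<ge> 4"
  shows "emeasure lborel {t \<in> {0..2 * pi}. w \<in> closed_square (of_real R * cis t) 1} \<le> ennreal (16 / R)"
proof -
  define u where "u = Arg w"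
  define A B where "A = {u - 4 / R .. u + 4 / R}" and "B = {u + 2 * pi - 4 / R .. u + 2 * pi + 4 / R}"
  have "{t \<in> {0..2 * pi}. w \<in> closed_square (of_real R * cis t) 1} \<subseteq> A \<union> B"
  proof
    fix t
    assume "t \<in> {t \<in> {0..2 * pi}. w \<in> closed_square (of_real R * cis t) 1}"
    then have t: "0 \<le> t" "t \<le> 2 * pi" and "w \<in> closed_square (of_real R * cis t) 1"
      by auto
    then have cos_t: "1 - cos (t - u) \<le> 2 / R\<^sup>2"
      unfolding u_def by (intro one_minus_cos_diff_Arg_le R norm_diff_squared_le_of_in_closed_square)
    have u: "- pi < u" "u \<le> pi"
      using Arg_bounded[of w] by (auto simp: u_def)
    show "t \<in> A \<union> B"
    proof (cases "t - u \<le> pi")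
      case True
      then have "\<bar>t - u\<bar> \<le> 4 / R"
        using t u cos_t by (intro abs_le_of_one_minus_cos_le R) auto
      then show ?thesis
        by (auto simp: A_def abs_le_iff)
    next
      case False
      then have "\<bar>t - u - 2 * pi\<bar> \<le> 4 / R"
        using t u cos_t by (intro abs_le_of_one_minus_cos_le R) (auto simp: cos_diff)
      then show ?thesis
        by (auto simp: B_def abs_le_iff)
    qed
  qed
  then have "emeasure lborel {t \<in> {0..2 * pi}. w \<in> closed_square (of_real R * cis t) 1}
      \<le> emeasure lborel A + emeasure lborel B"
    by (intro order_trans[OF emeasure_mono emeasure_subadditive]) (auto simp: A_def B_def)
  also have "\<dots> = ennreal (16 / R)"
    using R by (simp add: A_def B_def ennreal_plus[symmetric] del: ennreal_plus)
  finally show ?thesis .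
qed

lemma emeasure_angles_near_le_tail_weight:
  fixes R :: real and w :: complex
  assumes R: "R \<ge> 4"
  shows "emeasure lborel {t \<in> {0..2 * pi}. w \<in> closed_square (of_real R * cis t) 1}
    \<le> ennreal (64 / R ^ 3) * (indicator {w. R - 2 \<le> cmod w} w * ennreal ((cmod w)\<^sup>2))"
proof (cases "R - 2 \<le> cmod w")
  case True
  have "(R / 2)\<^sup>2 \<le> (cmod w)\<^sup>2"
    using True R by (intro power_mono) auto
  then have "16 / R \<le> 64 / R ^ 3 * (cmod w)\<^sup>2"
    using R by (simp add: field_simps power2_eq_square power3_eq_cube)
  then have "emeasure lborel {t \<in> {0..2 * pi}. w \<in> closed_square (of_real R * cis t) 1}
      \<le> ennreal (64 / R ^ 3 * (cmod w)\<^sup>2)"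
    by (intro order_trans[OF emeasure_angles_near_le[OF R]] ennreal_leI)
  also have "ennreal (64 / R ^ 3 * (cmod w)\<^sup>2) = ennreal (64 / R ^ 3) * ennreal ((cmod w)\<^sup>2)"
    using R by (intro ennreal_mult) auto
  finally show ?thesis
    using True by simp
next
  case False
  have "{t \<in> {0..2 * pi}. w \<in> closed_square (of_real R * cis t) 1} = {}"
  proof (rule equals0I)
    fix t
    assume "t \<in> {t \<in> {0..2 * pi}. w \<in> closed_square (of_real R * cis t) 1}"
    then have "(cmod (w - of_real R * cis t))\<^sup>2 \<le> 2\<^sup>2"
      using norm_diff_squared_le_of_in_closed_square by fastforce
    then have "cmod (w - of_real R * cis t) \<le> 2"
      by (rule power2_le_imp_le) simp
    moreover have "cmod (of_real R * cis t) \<le> cmod w + cmod (w - of_real R * cis t)"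
      by (metis norm_triangle_sub add.commute norm_minus_commute)
    ultimately show False
      using False R by (simp add: norm_mult)
  qed
  then show ?thesis
    by (simp only: emeasure_empty zero_le)
qed

lemma nn_integral_squares_on_circle_le:
  fixes W :: "complex \<Rightarrow> ennreal" and R :: real
  assumes [measurable]: "W \<in> borel_measurable borel" and R: "R \<ge> 4"
  shows "(\<integral>\<^sup>+ t. indicator {0..2 * pi} t *
      (\<integral>\<^sup>+ w. indicator (closed_square (of_real R * cis t) 1) w * W w \<partial>lborel) \<partial>lborel)
    \<le> ennreal (64 / R ^ 3) * (\<integral>\<^sup>+ w. indicator {w. R - 2 \<le> cmod w} w * ((cmod w)\<^sup>2 * W w) \<partial>lborel)"
proof -
  define Q where "Q = (\<lambda>t w. indicator {0..2 * pi} t * indicator (closed_square (of_real R * cis t) 1) w * W w)"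
  have Q_measurable: "(\<lambda>(t, w). Q t w) \<in> borel_measurable (lborel \<Otimes>\<^sub>M lborel)"
    unfolding Q_def by measurable
  have "(\<integral>\<^sup>+ t. indicator {0..2 * pi} t *
      (\<integral>\<^sup>+ w. indicator (closed_square (of_real R * cis t) 1) w * W w \<partial>lborel) \<partial>lborel)
      = (\<integral>\<^sup>+ t. \<integral>\<^sup>+ w. Q t w \<partial>lborel \<partial>lborel)"
    using measurable_Pair2[OF Q_measurable]
    by (intro nn_integral_cong) (simp add: Q_def nn_integral_cmult[symmetric] mult.assoc)
  also have "\<dots> = (\<integral>\<^sup>+ w. \<integral>\<^sup>+ t. Q t w \<partial>lborel \<partial>lborel)"
    using lborel_pair.Fubini'[OF Q_measurable] by simp
  also have "\<dots> \<le> (\<integral>\<^sup>+ w. ennreal (64 / R ^ 3) * (indicator {w. R - 2 \<le> cmod w} w * ((cmod w)\<^sup>2 * W w)) \<partial>lborel)"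
  proof (rule nn_integral_mono)
    fix w :: complex
    define S where "S = {t \<in> {0..2 * pi}. w \<in> closed_square (of_real R * cis t) 1}"
    have S_sets [measurable]: "S \<in> sets lborel"
      unfolding S_def by measurable
    have "Q t w = W w * indicator S t" for t
      by (simp add: Q_def S_def indicator_def)
    then have "(\<integral>\<^sup>+ t. Q t w \<partial>lborel) = W w * emeasure lborel S"
      using nn_integral_cmult_indicator[OF S_sets, of "W w"] by simp
    also have "\<dots> \<le> W w * (ennreal (64 / R ^ 3) * (indicator {w. R - 2 \<le> cmod w} w * ennreal ((cmod w)\<^sup>2)))"
      unfolding S_def by (intro mult_left_mono emeasure_angles_near_le_tail_weight R) simp
    also have "\<dots> = ennreal (64 / R ^ 3) * (indicator {w. R - 2 \<le> cmod w} w * ((cmod w)\<^sup>2 * W w))"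
      by (simp add: mult_ac)
    finally show "(\<integral>\<^sup>+ t. Q t w \<partial>lborel)
        \<le> ennreal (64 / R ^ 3) * (indicator {w. R - 2 \<le> cmod w} w * ((cmod w)\<^sup>2 * W w))" .
  qed
  also have "\<dots> = ennreal (64 / R ^ 3) * (\<integral>\<^sup>+ w. indicator {w. R - 2 \<le> cmod w} w * ((cmod w)\<^sup>2 * W w) \<partial>lborel)"
    by (rule nn_integral_cmult) measurable
  finally show ?thesis .
qed

lemma nn_integral_circle_le_tail:
  fixes f :: "complex \<Rightarrow> complex" and p \<alpha> R :: real
  assumes hol: "f holomorphic_on UNIV" and p: "0 < p" and \<alpha>: "0 \<le> \<alpha>" and R: "R \<ge> 4"
  shows "(\<integral>\<^sup>+ t. indicator {0..2 * pi} t * ennreal (cmod (f (of_real R * cis t)) powr p) \<partial>lborel)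
    \<le> ennreal (64 * square_mean_const p * exp (2 * \<alpha>) * exp (\<alpha> * R\<^sup>2) / R ^ 3) *
      (\<integral>\<^sup>+ w. indicator {w. R - 2 \<le> cmod w} w *
        ennreal (cmod (f w) powr p * (cmod w)\<^sup>2 * exp (- \<alpha> * (cmod w)\<^sup>2)) \<partial>lborel)"
proof -
  have [measurable]: "f \<in> borel_measurable borel"
    using hol holomorphic_on_imp_continuous_on borel_measurable_continuous_onI by blast
  define W where "W = (\<lambda>w. ennreal (cmod (f w) powr p * exp (- \<alpha> * (cmod w)\<^sup>2)))"
  define K where "K = exp (\<alpha> * R\<^sup>2) * (square_mean_const p * exp (2 * \<alpha>))"
  have K: "K \<ge> 0"
    using square_mean_const_pos[of p] by (simp add: K_def)
  have pointwise: "ennreal (cmod (f (of_real R * cis t)) powr p)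
      \<le> ennreal K * (\<integral>\<^sup>+ w. indicator (closed_square (of_real R * cis t) 1) w * W w \<partial>lborel)" for t
  proof -
    have norm_z: "cmod (of_real R * cis t) = R"
      using R by (simp add: norm_mult)
    have "ennreal (cmod (f (of_real R * cis t)) powr p * exp (- \<alpha> * R\<^sup>2))
        \<le> ennreal (square_mean_const p * exp (2 * \<alpha>)) *
          (\<integral>\<^sup>+ w. indicator (closed_square (of_real R * cis t) 1) w * W w \<partial>lborel)"
      using weighted_powr_norm_le_square_mean[OF hol p \<alpha>, of "of_real R * cis t"]
      unfolding norm_z W_def .
    have "ennreal (cmod (f (of_real R * cis t)) powr p)
        = ennreal (exp (\<alpha> * R\<^sup>2)) * ennreal (cmod (f (of_real R * cis t)) powr p * exp (- \<alpha> * R\<^sup>2))"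
      by (simp add: ennreal_mult[symmetric] exp_minus)
    also have "\<dots> \<le> ennreal (exp (\<alpha> * R\<^sup>2)) * (ennreal (square_mean_const p * exp (2 * \<alpha>)) *
        (\<integral>\<^sup>+ w. indicator (closed_square (of_real R * cis t) 1) w * W w \<partial>lborel))"
      by (rule mult_left_mono) (fact, simp)
    also have "\<dots> = ennreal K * (\<integral>\<^sup>+ w. indicator (closed_square (of_real R * cis t) 1) w * W w \<partial>lborel)"
      using square_mean_const_pos[of p] by (simp add: K_def ennreal_mult mult.assoc)
    finally show ?thesis .
  qed
  have "(\<integral>\<^sup>+ t. indicator {0..2 * pi} t * ennreal (cmod (f (of_real R * cis t)) powr p) \<partial>lborel)
      \<le> (\<integral>\<^sup>+ t. ennreal K * (indicator {0..2 * pi} t *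
          (\<integral>\<^sup>+ w. indicator (closed_square (of_real R * cis t) 1) w * W w \<partial>lborel)) \<partial>lborel)"
    using pointwise by (intro nn_integral_mono) (auto simp: indicator_def)
  also have "\<dots> = ennreal K * (\<integral>\<^sup>+ t. indicator {0..2 * pi} t *
      (\<integral>\<^sup>+ w. indicator (closed_square (of_real R * cis t) 1) w * W w \<partial>lborel) \<partial>lborel)"
    unfolding W_def by (rule nn_integral_cmult) measurable
  also have "\<dots> \<le> ennreal K * (ennreal (64 / R ^ 3) *
      (\<integral>\<^sup>+ w. indicator {w. R - 2 \<le> cmod w} w * ((cmod w)\<^sup>2 * W w) \<partial>lborel))"
    unfolding W_def by (intro mult_left_mono nn_integral_squares_on_circle_le R) auto
  also have "\<dots> = ennreal (K * (64 / R ^ 3)) *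
      (\<integral>\<^sup>+ w. indicator {w. R - 2 \<le> cmod w} w * ((cmod w)\<^sup>2 * W w) \<partial>lborel)"
    using K R by (subst ennreal_mult) (auto simp: mult.assoc)
  also have "K * (64 / R ^ 3) = 64 * square_mean_const p * exp (2 * \<alpha>) * exp (\<alpha> * R\<^sup>2) / R ^ 3"
    by (simp add: K_def)
  also have "(\<lambda>w. indicator {w. R - 2 \<le> cmod w} w * ((cmod w)\<^sup>2 * W w)) = (\<lambda>w. indicator {w. R - 2 \<le> cmod w} w *
        ennreal (cmod (f w) powr p * (cmod w)\<^sup>2 * exp (- \<alpha> * (cmod w)\<^sup>2)))"
    by (simp add: W_def ennreal_mult'' mult_ac)
  finally show ?thesis .
qed

section \<open>Tails of the weighted integral\<close>

lemma tendsto_tail_integral_zero: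
  fixes V :: "'a::euclidean_space \<Rightarrow> real"
  assumes V: "integrable lborel V"
  shows "((\<lambda>s. LINT w|lborel. indicator {w. s - c \<le> norm w} w * V w) \<longlongrightarrow> 0) at_top"
proof -
  have [measurable]: "V \<in> borel_measurable lborel"
    using V by (rule borel_measurable_integrable)
  have "((\<lambda>s. LINT w|lborel. indicator {w. s - c \<le> norm w} w * V w) \<longlongrightarrow> (LINT (w::'a)|lborel. 0)) at_top"
  proof (rule integral_dominated_convergence_at_top)
    show "integrable lborel (\<lambda>w. norm (V w))"
      using V by (rule integrable_norm)
    show "\<forall>\<^sub>F s in at_top. AE w in lborel. norm (indicator {w. s - c \<le> norm w} w * V w) \<le> norm (V w)"
      by (auto simp: indicator_def)
    show "AE w in lborel. ((\<lambda>s. indicator {w. s - c \<le> norm w} w * V w) \<longlongrightarrow> 0) at_top"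
    proof (rule AE_I2)
      fix w :: 'a
      have "\<forall>\<^sub>F s in at_top. indicator {w. s - c \<le> norm w} w * V w = 0"
        using eventually_gt_at_top[of "norm w + c"] by eventually_elim (auto simp: indicator_def)
      then show "((\<lambda>s. indicator {w. s - c \<le> norm w} w * V w) \<longlongrightarrow> 0) at_top"
        by (rule tendsto_eventually)
    qed
  qed measurable
  then show ?thesis
    by simp
qed

lemma Mpp_eq_integral:
  "Mpp p r f = (LINT t|lborel. indicator {0..2 * pi} t * cmod (f (of_real r * cis t)) powr p)"
  unfolding Mpp_def
  by (simp add: interval_integral_Icc zero_ereal_def set_lebesgue_integral_def)

lemma Mpp_nonneg: "0 \<le> Mpp p r f"
  unfolding Mpp_eq_integral by (intro Bochner_Integration.integral_nonneg) simp

lemma weighted_Mpp_le_tail_integral: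
  fixes f :: "complex \<Rightarrow> complex" and p \<alpha> R :: real
  defines "V \<equiv> \<lambda>w. cmod (f w) powr p * (cmod w)\<^sup>2 * exp (- \<alpha> * (cmod w)\<^sup>2)"
  assumes hol: "f holomorphic_on UNIV" and p: "0 < p" and \<alpha>: "0 \<le> \<alpha>" and R: "R \<ge> 4"
    and V: "integrable lborel V"
  shows "R ^ 3 * Mpp p R f * exp (- \<alpha> * R\<^sup>2)
    \<le> 64 * square_mean_const p * exp (2 * \<alpha>) * (LINT w|lborel. indicator {w. R - 2 \<le> cmod w} w * V w)"
proof -
  define C where "C = 64 * square_mean_const p * exp (2 * \<alpha>)"
  define T where "T = (LINT w|lborel. indicator {w. R - 2 \<le> cmod w} w * V w)"
  have T: "0 \<le> T"
    unfolding T_def V_def by (intro Bochner_Integration.integral_nonneg) simp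
  have "integrable lborel (\<lambda>w. indicator {w. R - 2 \<le> cmod w} w * V w)"
    using integrable_real_mult_indicator[OF _ V, of "{w. R - 2 \<le> cmod w}"] by (simp add: mult.commute)
  then have "(\<integral>\<^sup>+ w. indicator {w. R - 2 \<le> cmod w} w * ennreal (V w) \<partial>lborel) = ennreal T"
    unfolding T_def
    by (subst nn_integral_eq_integral[symmetric]) (auto simp: V_def indicator_mult_ennreal)
  then have tail: "(\<integral>\<^sup>+ w. indicator {w. R - 2 \<le> cmod w} w *
      ennreal (cmod (f w) powr p * (cmod w)\<^sup>2 * exp (- \<alpha> * (cmod w)\<^sup>2)) \<partial>lborel) = ennreal T"
    by (simp add: V_def)
  have "(\<integral>\<^sup>+ t. ennreal (indicator {0..2 * pi} t * cmod (f (of_real R * cis t)) powr p) \<partial>lborel)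
      = (\<integral>\<^sup>+ t. indicator {0..2 * pi} t * ennreal (cmod (f (of_real R * cis t)) powr p) \<partial>lborel)"
    by (simp add: indicator_mult_ennreal)
  also have "\<dots> \<le> ennreal (C * exp (\<alpha> * R\<^sup>2) / R ^ 3) * ennreal T"
    using nn_integral_circle_le_tail[OF hol p \<alpha> R] unfolding tail by (simp add: C_def)
  also have "\<dots> = ennreal (C * exp (\<alpha> * R\<^sup>2) / R ^ 3 * T)"
    using square_mean_const_pos[of p] R T by (subst ennreal_mult) (auto simp: C_def)
  finally have "(\<integral>\<^sup>+ t. ennreal (indicator {0..2 * pi} t * cmod (f (of_real R * cis t)) powr p) \<partial>lborel)
      \<le> ennreal (C * exp (\<alpha> * R\<^sup>2) / R ^ 3 * T)" .
  then have "Mpp p R f \<le> C * exp (\<alpha> * R\<^sup>2) / R ^ 3 * T"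
    unfolding Mpp_eq_integral
    by (rule integral_real_bounded[rotated])
       (use square_mean_const_pos[of p] T R in \<open>simp add: C_def\<close>)
  then have "R ^ 3 * Mpp p R f * exp (- \<alpha> * R\<^sup>2) \<le> R ^ 3 * (C * exp (\<alpha> * R\<^sup>2) / R ^ 3 * T) * exp (- \<alpha> * R\<^sup>2)"
    using R by (intro mult_right_mono mult_left_mono) auto
  also have "\<dots> = C * T"
    using R by (simp add: exp_minus field_simps)
  finally show ?thesis
    by (simp add: C_def T_def)
qed

theorem theorem4p4:
  fixes f :: "complex \<Rightarrow> complex" and \<alpha> p :: real
  assumes "\<alpha> > 0" and "p > 0"
    and "f holomorphic_on UNIV"
    and "(\<integral>\<^sup>+ z. ennreal (norm (f z) powr p * norm z ^ 2 * exp (- \<alpha> * norm z ^ 2)) \<partial>lborel) < \<infinity>"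
  shows "((\<lambda>r. r ^ 3 * Mpp p r f * exp (- \<alpha> * r ^ 2)) \<longlongrightarrow> 0) at_top"
proof -
  define V where "V = (\<lambda>z. norm (f z) powr p * norm z ^ 2 * exp (- \<alpha> * norm z ^ 2))"
  define C where "C = 64 * square_mean_const p * exp (2 * \<alpha>)"
  have [measurable]: "f \<in> borel_measurable borel"
    using assms(3) holomorphic_on_imp_continuous_on borel_measurable_continuous_onI by blast
  have V: "integrable lborel V"
    using assms(4) by (intro integrableI_nonneg) (auto simp: V_def)
  have "\<forall>\<^sub>F r in at_top. 0 \<le> r ^ 3 * Mpp p r f * exp (- \<alpha> * r ^ 2)"
    using eventually_ge_at_top[of 0] by (rule eventually_mono) (simp add: Mpp_nonneg)
  moreover have "\<forall>\<^sub>F r in at_top. r ^ 3 * Mpp p r f * exp (- \<alpha> * r ^ 2)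
      \<le> C * (LINT w|lborel. indicator {w. r - 2 \<le> cmod w} w * V w)"
    using eventually_ge_at_top[of 4] by (rule eventually_mono)
      (use weighted_Mpp_le_tail_integral[OF assms(3,2) less_imp_le[OF assms(1)] _ V[unfolded V_def]]
        in \<open>simp add: C_def V_def\<close>)
  moreover have "((\<lambda>r. C * (LINT w|lborel. indicator {w. r - 2 \<le> cmod w} w * V w)) \<longlongrightarrow> 0) at_top"
    using tendsto_tail_integral_zero[OF V, of 2] by (rule tendsto_mult_right_zero)
  ultimately show ?thesis
    by (rule tendsto_sandwich[OF _ _ tendsto_const])
qed

end
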